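(* Let $n_1\ge n_2\ge n_3\ge0$ be integers with $n_1\ge2$ and $n_1+n_2+n_3\ge3$, and let $T$ be a uniformly random standard Young tableau of shape $(n_1,n_2,n_3)$ (zero parts omitted). Then $$\Pr(T_{1,2}=3)=\frac{n_1^2n_2+n_1^2n_3+n_1n_2^2+2n_1n_2n_3+n_1n_3^2+n_2^2n_3+n_2n_3^2-n_1n_2-n_1n_3+n_2^2-n_2n_3+2n_3^2-2n_2-6n_3}{(n_1+n_2+n_3-2)(n_1+n_2+n_3-1)(n_1+n_2+n_3)}.$$
   Context: A standard Young tableau of shape $\lambda=(\lambda_1,\dots,\lambda_k)$, $\lambda_1\ge\dots\ge\lambda_k>0$, with $N=\sum\lambda_i$ cells is a bijective filling $T$ of the cells $[a,b]$ ($1\le a\le k$, $1\le b\le\lambda_a$; row $a$, column $b$) by $\{1,\dots,N\}$ that increases along each row and down each column. $T_{a,b}$ denotes the entry in cell $[a,b]$. *)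

theory Defs
  imports Complex_Main
begin

text \<open>A partition is a list of positive, weakly decreasing parts.
 Cells are pairs (row a, column b), 1-indexed: 1 \<le> a \<le> k, 1 \<le> b \<le> lambda_a.\<close>

definition is_partition :: "nat list \<Rightarrow> bool" where
  "is_partition lam \<longleftrightarrow> sorted_wrt (\<ge>) lam \<and> (\<forall>x\<in>set lam. x > 0)"

definition cells :: "nat list \<Rightarrow> (nat \<times> nat) set" where
  "cells lam = {(a, b). 1 \<le> a \<and> a \<le> length lam \<and> 1 \<le> b \<and> b \<le> lam ! (a - 1)}"

text \<open>Standard Young tableaux of shape lam, as functions on cells (set to 0 outside
 the diagram so that the set of tableaux is finite).\<close>

definition SYT :: "nat list \<Rightarrow> ((nat \<times> nat) \<Rightarrow> nat) set" where
  "SYT lam = {T. bij_betw T (cells lam) {1..sum_list lam}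
      \<and> (\<forall>a b b'. (a, b) \<in> cells lam \<longrightarrow> (a, b') \<in> cells lam \<longrightarrow> b < b' \<longrightarrow> T (a, b) < T (a, b'))
      \<and> (\<forall>a a' b. (a, b) \<in> cells lam \<longrightarrow> (a', b) \<in> cells lam \<longrightarrow> a < a' \<longrightarrow> T (a, b) < T (a', b))
      \<and> (\<forall>c. c \<notin> cells lam \<longrightarrow> T c = 0)}"

definition syt_prob :: "nat list \<Rightarrow> (((nat \<times> nat) \<Rightarrow> nat) \<Rightarrow> bool) \<Rightarrow> real" where
  "syt_prob lam P = real (card {T \<in> SYT lam. P T}) / real (card (SYT lam))"

end

theory Submission
  imports Defs
begin

text \<open>Removing the largest entry of a standard tableau leaves a standard tableau of the shape with
  one corner cell deleted, so the number of tableaux of shape \<open>(a, b, c)\<close> satisfies the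
  branching recursion over the (at most three) corners.  The hook-length formula satisfies the same
  recursion, which identifies it with the count.  The event \<open>T(1,2) = 3\<close> is not affected by
  removing the largest entry once there are at least four cells, so the tableaux in this event obey
  the same recursion; the claimed probability times the hook-length number obeys it too (a polynomial
  identity), and both agree on the three shapes with three cells.\<close>

definition std_fillings :: "(nat \<times> nat) set \<Rightarrow> nat \<Rightarrow> ((nat \<times> nat) \<Rightarrow> nat) set" where
  "std_fillings D n = {T. bij_betw T D {1..n}
      \<and> (\<forall>a b b'. (a, b) \<in> D \<longrightarrow> (a, b') \<in> D \<longrightarrow> b < b' \<longrightarrow> T (a, b) < T (a, b'))
      \<and> (\<forall>a a' b. (a, b) \<in> D \<longrightarrow> (a', b) \<in> D \<longrightarrow> a < a' \<longrightarrow> T (a, b) < T (a', b))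
      \<and> (\<forall>c. c \<notin> D \<longrightarrow> T c = 0)}"

lemma SYT_eq_std_fillings: "SYT lam = std_fillings (cells lam) (sum_list lam)"
  unfolding SYT_def std_fillings_def ..

definition corner :: "(nat \<times> nat) set \<Rightarrow> nat \<times> nat \<Rightarrow> bool" where
  "corner D x \<longleftrightarrow> x \<in> D \<and> (\<forall>j. (fst x, j) \<in> D \<longrightarrow> j \<le> snd x) \<and> (\<forall>i. (i, snd x) \<in> D \<longrightarrow> i \<le> fst x)"

lemma finite_std_fillings: "finite (std_fillings D n)"
proof (cases "finite D")
  case True
  have "std_fillings D n \<subseteq> {T. \<forall>x. (x \<in> D \<longrightarrow> T x \<in> {1..n}) \<and> (x \<notin> D \<longrightarrow> T x = 0)}"
    by (auto simp: std_fillings_def bij_betw_def)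
  moreover have "finite {T. \<forall>x. (x \<in> D \<longrightarrow> T x \<in> {1..n}) \<and> (x \<notin> D \<longrightarrow> T x = (0::nat))}"
    by (rule finite_set_of_finite_funs) (use True in auto)
  ultimately show ?thesis
    by (rule finite_subset)
next
  case False
  then have "std_fillings D n = {}"
    by (auto simp: std_fillings_def dest: bij_betw_finite)
  then show ?thesis
    by simp
qed

lemma std_fillings_outside: "T \<in> std_fillings D n \<Longrightarrow> x \<notin> D \<Longrightarrow> T x = 0"
  unfolding std_fillings_def by blast

lemma std_fillings_range: "T \<in> std_fillings D n \<Longrightarrow> x \<in> D \<Longrightarrow> T x \<in> {1..n}"
  by (auto simp: std_fillings_def bij_betw_def)

lemma std_fillings_inj:
  assumes "T \<in> std_fillings D n" "T x = T y" "0 < T x"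
  shows "x = y"
  using assms std_fillings_outside[OF assms(1), of x] std_fillings_outside[OF assms(1), of y]
  by (auto simp: std_fillings_def bij_betw_def inj_on_def)

lemma std_fillings_max_at_corner:
  assumes T: "T \<in> std_fillings D n" and "T x = n" "1 \<le> n"
  shows "corner D x"
proof -
  obtain p q where x: "x = (p, q)"
    by (cases x)
  have "x \<in> D"
    using std_fillings_outside[OF T, of x] assms(2,3) by auto
  moreover have "j \<le> q" if "(p, j) \<in> D" for j
  proof (rule ccontr)
    assume "\<not> j \<le> q"
    then have "T (p, q) < T (p, j)"
      using T \<open>x \<in> D\<close> that x unfolding std_fillings_def by auto
    with std_fillings_range[OF T that] assms(2) x show False
      by simp
  qed
  moreover have "i \<le> p" if "(i, q) \<in> D" for i
  proof (rule ccontr)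
    assume "\<not> i \<le> p"
    then have "T (p, q) < T (i, q)"
      using T \<open>x \<in> D\<close> that x unfolding std_fillings_def by auto
    with std_fillings_range[OF T that] assms(2) x show False
      by simp
  qed
  ultimately show ?thesis
    using x by (simp add: corner_def)
qed

lemma std_fillings_remove_max:
  assumes T: "T \<in> std_fillings D n" and "T x = n" "x \<in> D" "1 \<le> n"
  shows "T(x := 0) \<in> std_fillings (D - {x}) (n - 1)"
proof -
  have "bij_betw T D {1..n}"
    using T by (simp add: std_fillings_def)
  moreover have "bij_betw T {x} {n}"
    using assms(2) by (simp add: bij_betw_def)
  ultimately have "bij_betw T (D - {x}) ({1..n} - {n})"
    using assms(3,4) by (intro bij_betw_DiffI) auto
  moreover have "{1..n} - {n} = {1..n - 1}"
    using assms(4) by auto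
  ultimately have "bij_betw T (D - {x}) {1..n - 1}"
    by simp
  then have "bij_betw (T(x := 0)) (D - {x}) {1..n - 1}"
    by (rule bij_betw_cong[THEN iffD1, rotated]) auto
  then show ?thesis
    using T unfolding std_fillings_def by auto
qed

lemma std_fillings_insert_max:
  assumes T: "T \<in> std_fillings (D - {x}) (n - 1)" and "corner D x" "1 \<le> n"
  shows "T(x := n) \<in> std_fillings D n"
proof -
  have "x \<in> D"
    using assms(2) by (simp add: corner_def)
  have below: "T c < n" if "c \<in> D - {x}" for c
    using std_fillings_range[OF T that] assms(3) by auto
  have "bij_betw (T(x := n)) ((D - {x}) \<union> {x}) ({1..n - 1} \<union> {n})"
  proof (rule bij_betw_combine)
    have "bij_betw T (D - {x}) {1..n - 1}"
      using T by (simp add: std_fillings_def)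
    then show "bij_betw (T(x := n)) (D - {x}) {1..n - 1}"
      by (rule bij_betw_cong[THEN iffD1, rotated]) auto
  qed (auto simp: bij_betw_def)
  moreover have "(D - {x}) \<union> {x} = D" "{1..n - 1} \<union> {n} = {1..n}"
    using \<open>x \<in> D\<close> assms(3) by auto
  ultimately have "bij_betw (T(x := n)) D {1..n}"
    by simp
  moreover have "(T(x := n)) (a, b) < (T(x := n)) (a, b')"
    if "(a, b) \<in> D" "(a, b') \<in> D" "b < b'" for a b b'
  proof -
    have "(a, b) \<noteq> x"
      using assms(2) that unfolding corner_def by force
    then show ?thesis
      using T below[of "(a, b)"] that unfolding std_fillings_def by auto
  qed
  moreover have "(T(x := n)) (a, b) < (T(x := n)) (a', b)"
    if "(a, b) \<in> D" "(a', b) \<in> D" "a < a'" for a a' b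
  proof -
    have "(a, b) \<noteq> x"
      using assms(2) that unfolding corner_def by force
    then show ?thesis
      using T below[of "(a, b)"] that unfolding std_fillings_def by auto
  qed
  ultimately show ?thesis
    using T \<open>x \<in> D\<close> by (auto simp: std_fillings_def)
qed

lemma card_std_fillings_max_at:
  assumes "corner D x" "1 \<le> n" "\<And>T. T x = n \<Longrightarrow> Q (T(x := 0)) = Q T"
  shows "card {T \<in> std_fillings D n. T x = n \<and> Q T} = card {T \<in> std_fillings (D - {x}) (n - 1). Q T}"
proof (rule bij_betw_same_card[of "\<lambda>T. T(x := 0)"])
  have "x \<in> D"
    using assms(1) by (simp add: corner_def)
  show "bij_betw (\<lambda>T. T(x := 0)) {T \<in> std_fillings D n. T x = n \<and> Q T}
      {T \<in> std_fillings (D - {x}) (n - 1). Q T}"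
  proof (rule bij_betw_byWitness[where f' = "\<lambda>T. T(x := n)"])
    show "\<forall>T \<in> {T \<in> std_fillings (D - {x}) (n - 1). Q T}. (T(x := n))(x := 0) = T"
      using std_fillings_outside[of _ "D - {x}" "n - 1" x] by auto
    show "(\<lambda>T. T(x := 0)) ` {T \<in> std_fillings D n. T x = n \<and> Q T}
        \<subseteq> {T \<in> std_fillings (D - {x}) (n - 1). Q T}"
      using std_fillings_remove_max[OF _ _ \<open>x \<in> D\<close> assms(2)] assms(3) by blast
    show "(\<lambda>T. T(x := n)) ` {T \<in> std_fillings (D - {x}) (n - 1). Q T}
        \<subseteq> {T \<in> std_fillings D n. T x = n \<and> Q T}"
    proof (rule image_subsetI)
      fix T assume "T \<in> {T \<in> std_fillings (D - {x}) (n - 1). Q T}"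
      moreover from this have "(T(x := n))(x := 0) = T"
        using std_fillings_outside[of T "D - {x}" "n - 1" x] by auto
      ultimately show "T(x := n) \<in> {T \<in> std_fillings D n. T x = n \<and> Q T}"
        using std_fillings_insert_max[of T D x n] assms by (metis (mono_tags) fun_upd_same mem_Collect_eq)
    qed
  qed auto
qed

lemma card_std_fillings_by_max_corner:
  assumes "finite C" "Collect (corner D) \<subseteq> C" "1 \<le> n"
    and "\<And>T x. T x = n \<Longrightarrow> Q (T(x := 0)) = Q T"
  shows "card {T \<in> std_fillings D n. Q T} =
    (\<Sum>x\<in>C. if corner D x then card {T \<in> std_fillings (D - {x}) (n - 1). Q T} else 0)"
proof -
  have "{T \<in> std_fillings D n. Q T} = (\<Union>x\<in>C. {T \<in> std_fillings D n. T x = n \<and> Q T})"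
  proof (intro equalityI subsetI)
    fix T assume T: "T \<in> {T \<in> std_fillings D n. Q T}"
    then have "n \<in> T ` D"
      using assms(3) by (auto simp: std_fillings_def bij_betw_def)
    then obtain x where "T x = n"
      by blast
    moreover have "x \<in> C"
      using std_fillings_max_at_corner[of T D n x] T \<open>T x = n\<close> assms(2,3) by auto
    ultimately show "T \<in> (\<Union>x\<in>C. {T \<in> std_fillings D n. T x = n \<and> Q T})"
      using T by auto
  qed auto
  moreover have "{T \<in> std_fillings D n. T x = n \<and> Q T} \<inter> {T \<in> std_fillings D n. T y = n \<and> Q T} = {}"
    if "x \<noteq> y" for x y
  proof -
    have "x = y" if "T \<in> std_fillings D n" "T x = n" "T y = n" for T
      using std_fillings_inj[of T D n x y] that assms(3) by simp
    then show ?thesis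
      using \<open>x \<noteq> y\<close> by blast
  qed
  ultimately have "card {T \<in> std_fillings D n. Q T} = (\<Sum>x\<in>C. card {T \<in> std_fillings D n. T x = n \<and> Q T})"
    by (simp add: card_UN_disjoint assms(1) finite_std_fillings)
  also have "\<dots> = (\<Sum>x\<in>C. if corner D x then card {T \<in> std_fillings (D - {x}) (n - 1). Q T} else 0)"
  proof (rule sum.cong)
    fix x
    show "card {T \<in> std_fillings D n. T x = n \<and> Q T} =
      (if corner D x then card {T \<in> std_fillings (D - {x}) (n - 1). Q T} else 0)"
    proof (cases "corner D x")
      case True
      then show ?thesis
        using card_std_fillings_max_at[OF True assms(3), of Q] assms(4) by simp
    next
      case False
      then have none: "{T \<in> std_fillings D n. T x = n \<and> Q T} = {}"
        using std_fillings_max_at_corner assms(3) by blast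
      show ?thesis
        unfolding none using False by simp
    qed
  qed simp
  finally show ?thesis .
qed

definition shape3_cells :: "nat \<Rightarrow> nat \<Rightarrow> nat \<Rightarrow> (nat \<times> nat) set" where
  "shape3_cells a b c = {(i, j). 1 \<le> j \<and> ((i = 1 \<and> j \<le> a) \<or> (i = 2 \<and> j \<le> b) \<or> (i = 3 \<and> j \<le> c))}"

lemma cells_shape3:
  assumes "c \<le> b" "b \<le> a"
  shows "cells (filter (\<lambda>x. x > 0) [a, b, c]) = shape3_cells a b c"
proof -
  consider "b = 0" "c = 0" | "0 < b" "c = 0" | "0 < c"
    by auto
  then show ?thesis
    by cases (use assms in \<open>auto simp: cells_def shape3_cells_def nth_Cons' le_Suc_eq numeral_3_eq_3\<close>)
qed

lemma corner_shape3_iff: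
  assumes "c \<le> b" "b \<le> a"
  shows "corner (shape3_cells a b c) (i, j) \<longleftrightarrow>
    (i = 1 \<and> j = a \<and> b < a) \<or> (i = 2 \<and> j = b \<and> c < b) \<or> (i = 3 \<and> j = c \<and> 0 < c)"
proof
  assume C: "corner (shape3_cells a b c) (i, j)"
  then have row: "(i, j') \<in> shape3_cells a b c \<Longrightarrow> j' \<le> j"
    and col: "(i', j) \<in> shape3_cells a b c \<Longrightarrow> i' \<le> i" for i' j'
    by (auto simp: corner_def)
  from C consider "i = 1" "1 \<le> j" "j \<le> a" | "i = 2" "1 \<le> j" "j \<le> b" | "i = 3" "1 \<le> j" "j \<le> c"
    by (auto simp: corner_def shape3_cells_def)
  then show "(i = 1 \<and> j = a \<and> b < a) \<or> (i = 2 \<and> j = b \<and> c < b) \<or> (i = 3 \<and> j = c \<and> 0 < c)"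
  proof cases
    case 1
    with row[of a] col[of 2] show ?thesis
      by (force simp: shape3_cells_def)
  next
    case 2
    with row[of b] col[of 3] show ?thesis
      by (force simp: shape3_cells_def)
  next
    case 3
    with row[of c] show ?thesis
      by (force simp: shape3_cells_def)
  qed
next
  assume "(i = 1 \<and> j = a \<and> b < a) \<or> (i = 2 \<and> j = b \<and> c < b) \<or> (i = 3 \<and> j = c \<and> 0 < c)"
  with assms show "corner (shape3_cells a b c) (i, j)"
    by (auto simp: corner_def shape3_cells_def)
qed

lemma shape3_cells_remove_corner:
  "b < a \<Longrightarrow> shape3_cells a b c - {(1, a)} = shape3_cells (a - 1) b c"
  "c < b \<Longrightarrow> shape3_cells a b c - {(2, b)} = shape3_cells a (b - 1) c"
  "0 < c \<Longrightarrow> shape3_cells a b c - {(3, c)} = shape3_cells a b (c - 1)"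
  by (auto simp: shape3_cells_def)

definition syt3_count :: "(((nat \<times> nat) \<Rightarrow> nat) \<Rightarrow> bool) \<Rightarrow> nat \<Rightarrow> nat \<Rightarrow> nat \<Rightarrow> nat" where
  "syt3_count Q a b c = card {T \<in> std_fillings (shape3_cells a b c) (a + b + c). Q T}"

definition corner_sum :: "(nat \<Rightarrow> nat \<Rightarrow> nat \<Rightarrow> real) \<Rightarrow> nat \<Rightarrow> nat \<Rightarrow> nat \<Rightarrow> real" where
  "corner_sum f a b c =
    (if b < a then f (a - 1) b c else 0) + (if c < b then f a (b - 1) c else 0) + (if 0 < c then f a b (c - 1) else 0)"

lemma syt3_count_rec:
  assumes "c \<le> b" "b \<le> a" "0 < a + b + c"
    and "\<And>T x. T x = a + b + c \<Longrightarrow> Q (T(x := 0)) = Q T"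
  shows "real (syt3_count Q a b c) = corner_sum (\<lambda>a b c. real (syt3_count Q a b c)) a b c"
proof -
  let ?D = "shape3_cells a b c" and ?n = "a + b + c"
  let ?h = "\<lambda>x. if corner ?D x then card {T \<in> std_fillings (?D - {x}) (?n - 1). Q T} else 0"
  have corners: "Collect (corner ?D) \<subseteq> {(1, a), (2, b), (3, c)}"
    using corner_shape3_iff[OF assms(1,2)] by auto
  have "syt3_count Q a b c = (\<Sum>x\<in>{(1, a), (2, b), (3, c)}. ?h x)"
    unfolding syt3_count_def using corners assms(3,4) by (intro card_std_fillings_by_max_corner) auto
  also have "\<dots> = ?h (1, a) + ?h (2, b) + ?h (3, c)"
    by simp
  also have "?h (1, a) = (if b < a then syt3_count Q (a - 1) b c else 0)"
    using shape3_cells_remove_corner(1)[of b a c]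
    by (simp add: corner_shape3_iff[OF assms(1,2)] syt3_count_def)
  also have "?h (2, b) = (if c < b then syt3_count Q a (b - 1) c else 0)"
    using shape3_cells_remove_corner(2)[of c b a]
    by (simp add: corner_shape3_iff[OF assms(1,2)] syt3_count_def)
  also have "?h (3, c) = (if 0 < c then syt3_count Q a b (c - 1) else 0)"
    using shape3_cells_remove_corner(3)[of c a b]
    by (simp add: corner_shape3_iff[OF assms(1,2)] syt3_count_def)
  finally show ?thesis
    by (simp add: corner_sum_def)
qed

lemma shape3_rec_unique:
  fixes f g :: "nat \<Rightarrow> nat \<Rightarrow> nat \<Rightarrow> real"
  assumes base: "\<And>a b c. c \<le> b \<Longrightarrow> b \<le> a \<Longrightarrow> a + b + c = m \<Longrightarrow> f a b c = g a b c"
    and f_rec: "\<And>a b c. c \<le> b \<Longrightarrow> b \<le> a \<Longrightarrow> m < a + b + c \<Longrightarrow> f a b c = corner_sum f a b c"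
    and g_rec: "\<And>a b c. c \<le> b \<Longrightarrow> b \<le> a \<Longrightarrow> m < a + b + c \<Longrightarrow> g a b c = corner_sum g a b c"
  shows "c \<le> b \<Longrightarrow> b \<le> a \<Longrightarrow> m \<le> a + b + c \<Longrightarrow> f a b c = g a b c"
proof (induction "a + b + c - m" arbitrary: a b c)
  case 0
  then show ?case
    using base by simp
next
  case (Suc k)
  then have "f a' b' c' = g a' b' c'"
    if "c' \<le> b'" "b' \<le> a'" "a' + b' + c' + 1 = a + b + c" for a' b' c'
    using that by simp
  then have "corner_sum f a b c = corner_sum g a b c"
    using Suc.prems by (simp add: corner_sum_def)
  then show ?case
    using f_rec g_rec Suc by simp
qed

text \<open>Frobenius' form of the hook-length formula: with \<open>l = (a + 2, b + 1, c)\<close> the number of tableaux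
  is \<open>(a + b + c)! (l1 - l2) (l1 - l3) (l2 - l3) / (l1! l2! l3!)\<close>.\<close>

definition shifted_vandermonde :: "real \<Rightarrow> real \<Rightarrow> real \<Rightarrow> real" where
  "shifted_vandermonde x y z = (x - y + 1) * (x - z + 2) * (y - z + 1)"

definition hook_prefactor :: "nat \<Rightarrow> nat \<Rightarrow> nat \<Rightarrow> real" where
  "hook_prefactor a b c = fact (a + b + c) / (fact (a + 2) * fact (b + 1) * fact c)"

definition syt3_number :: "nat \<Rightarrow> nat \<Rightarrow> nat \<Rightarrow> real" where
  "syt3_number a b c = hook_prefactor a b c * shifted_vandermonde a b c"

lemma shifted_vandermonde_rec:
  "(x + y + z) * shifted_vandermonde x y z =
    (x + 2) * shifted_vandermonde (x - 1) y z + (y + 1) * shifted_vandermonde x (y - 1) z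
    + z * shifted_vandermonde x y (z - 1)"
  unfolding shifted_vandermonde_def by algebra

lemma hook_prefactor_Suc:
  "hook_prefactor (Suc a) b c * (real a + 3) = hook_prefactor a b c * real (Suc (a + b + c))"
  "hook_prefactor a (Suc b) c * (real b + 2) = hook_prefactor a b c * real (Suc (a + b + c))"
  "hook_prefactor a b (Suc c) * (real c + 1) = hook_prefactor a b c * real (Suc (a + b + c))"
  unfolding hook_prefactor_def
  by (simp_all add: field_simps numeral_3_eq_3 del: fact_Suc) (simp_all add: algebra_simps)

lemma syt3_number_remove_corner:
  assumes "c \<le> b" "b \<le> a" "0 < a + b + c"
  shows "(if b < a then syt3_number (a - 1) b c else 0) =
      hook_prefactor a b c * (real a + 2) * shifted_vandermonde (real a - 1) b c / real (a + b + c)"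
    "(if c < b then syt3_number a (b - 1) c else 0) =
      hook_prefactor a b c * (real b + 1) * shifted_vandermonde a (real b - 1) c / real (a + b + c)"
    "(if 0 < c then syt3_number a b (c - 1) else 0) =
      hook_prefactor a b c * real c * shifted_vandermonde a b (real c - 1) / real (a + b + c)"
proof -
  show "(if b < a then syt3_number (a - 1) b c else 0) =
      hook_prefactor a b c * (real a + 2) * shifted_vandermonde (real a - 1) b c / real (a + b + c)"
  proof (cases "b < a")
    case True
    then obtain a' where "a = Suc a'"
      by (cases a) auto
    then show ?thesis
      using True hook_prefactor_Suc(1)[of a' b c]
      by (simp add: syt3_number_def field_simps)
  next
    case False
    with assms show ?thesis
      by (simp add: shifted_vandermonde_def)
  qed
  show "(if c < b then syt3_number a (b - 1) c else 0) =
      hook_prefactor a b c * (real b + 1) * shifted_vandermonde a (real b - 1) c / real (a + b + c)"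
  proof (cases "c < b")
    case True
    then obtain b' where "b = Suc b'"
      by (cases b) auto
    then show ?thesis
      using True hook_prefactor_Suc(2)[of a b' c]
      by (simp add: syt3_number_def field_simps)
  next
    case False
    with assms show ?thesis
      by (simp add: shifted_vandermonde_def)
  qed
  show "(if 0 < c then syt3_number a b (c - 1) else 0) =
      hook_prefactor a b c * real c * shifted_vandermonde a b (real c - 1) / real (a + b + c)"
  proof (cases "0 < c")
    case True
    then obtain c' where "c = Suc c'"
      by (cases c) auto
    then show ?thesis
      using True hook_prefactor_Suc(3)[of a b c']
      by (simp add: syt3_number_def field_simps)
  qed simp
qed

lemma syt3_number_rec:
  assumes "c \<le> b" "b \<le> a" "0 < a + b + c"
  shows "syt3_number a b c = corner_sum syt3_number a b c"
proof -
  have "real a + real b + real c \<noteq> 0"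
    using assms(3) by linarith
  then have "syt3_number a b c =
      hook_prefactor a b c * ((real a + real b + real c) * shifted_vandermonde a b c) / real (a + b + c)"
    by (simp add: syt3_number_def)
  also have "\<dots> = corner_sum syt3_number a b c"
    unfolding shifted_vandermonde_rec corner_sum_def syt3_number_remove_corner[OF assms]
    by (simp add: add_divide_distrib algebra_simps)
  finally show ?thesis .
qed

definition syt3_prob_numerator :: "real \<Rightarrow> real \<Rightarrow> real \<Rightarrow> real" where
  "syt3_prob_numerator x y z = x^2*y + x^2*z + x*y^2 + 2*x*y*z + x*z^2 + y^2*z + y*z^2 - x*y - x*z
    + y^2 - y*z + 2*z^2 - 2*y - 6*z"

definition syt3_prob :: "real \<Rightarrow> real \<Rightarrow> real \<Rightarrow> real" where
  "syt3_prob x y z = syt3_prob_numerator x y z / ((x + y + z - 2) * (x + y + z - 1) * (x + y + z))"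

lemma syt3_prob_numerator_rec:
  "(x + y + z - 3) * syt3_prob_numerator x y z * shifted_vandermonde x y z =
    (x + 2) * shifted_vandermonde (x - 1) y z * syt3_prob_numerator (x - 1) y z
    + (y + 1) * shifted_vandermonde x (y - 1) z * syt3_prob_numerator x (y - 1) z
    + z * shifted_vandermonde x y (z - 1) * syt3_prob_numerator x y (z - 1)"
  unfolding syt3_prob_numerator_def shifted_vandermonde_def by algebra

lemma syt3_prob_rec:
  fixes x y z :: real
  defines "s \<equiv> x + y + z"
  assumes "s \<noteq> 0" "s \<noteq> 1" "s \<noteq> 2" "s \<noteq> 3"
  shows "s * (syt3_prob x y z * shifted_vandermonde x y z) =
    (x + 2) * shifted_vandermonde (x - 1) y z * syt3_prob (x - 1) y z
    + (y + 1) * shifted_vandermonde x (y - 1) z * syt3_prob x (y - 1) z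
    + z * shifted_vandermonde x y (z - 1) * syt3_prob x y (z - 1)"
proof -
  define d where "d = (s - 2) * (s - 1)"
  have d: "d \<noteq> 0" "s - 3 \<noteq> 0"
    using assms by (auto simp: d_def)
  have shift: "syt3_prob (x - 1) y z = syt3_prob_numerator (x - 1) y z / ((s - 3) * d)"
    "syt3_prob x (y - 1) z = syt3_prob_numerator x (y - 1) z / ((s - 3) * d)"
    "syt3_prob x y (z - 1) = syt3_prob_numerator x y (z - 1) / ((s - 3) * d)"
    unfolding syt3_prob_def s_def d_def by (simp_all add: algebra_simps)
  have "syt3_prob x y z = syt3_prob_numerator x y z / (d * s)"
    unfolding syt3_prob_def s_def d_def ..
  then have "s * (syt3_prob x y z * shifted_vandermonde x y z) =
      syt3_prob_numerator x y z * shifted_vandermonde x y z / d"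
    using d assms(2) by (simp add: field_simps)
  also have "\<dots> = (s - 3) * syt3_prob_numerator x y z * shifted_vandermonde x y z / ((s - 3) * d)"
    using d by simp
  also have "\<dots> = (x + 2) * shifted_vandermonde (x - 1) y z * syt3_prob (x - 1) y z
    + (y + 1) * shifted_vandermonde x (y - 1) z * syt3_prob x (y - 1) z
    + z * shifted_vandermonde x y (z - 1) * syt3_prob x y (z - 1)"
    unfolding shift s_def syt3_prob_numerator_rec by (simp add: add_divide_distrib)
  finally show ?thesis .
qed

lemma syt3_prob_number_rec:
  assumes "c \<le> b" "b \<le> a" "3 < a + b + c"
  shows "syt3_prob a b c * syt3_number a b c =
    corner_sum (\<lambda>a b c. syt3_prob a b c * syt3_number a b c) a b c"
proof -
  let ?K = "hook_prefactor a b c" and ?N = "real (a + b + c)"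
  have pos: "0 < a + b + c"
    using assms(3) by arith
  have "corner_sum (\<lambda>a b c. syt3_prob a b c * syt3_number a b c) a b c =
      syt3_prob (real a - 1) b c * (if b < a then syt3_number (a - 1) b c else 0)
      + syt3_prob a (real b - 1) c * (if c < b then syt3_number a (b - 1) c else 0)
      + syt3_prob a b (real c - 1) * (if 0 < c then syt3_number a b (c - 1) else 0)"
    by (simp add: corner_sum_def of_nat_diff)
  also have "\<dots> = ?K / ?N *
      ((real a + 2) * shifted_vandermonde (real a - 1) b c * syt3_prob (real a - 1) b c
        + (real b + 1) * shifted_vandermonde a (real b - 1) c * syt3_prob a (real b - 1) c
        + real c * shifted_vandermonde a b (real c - 1) * syt3_prob a b (real c - 1))"
    unfolding syt3_number_remove_corner[OF assms(1,2) pos] by algebra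
  also have "\<dots> = ?K / ?N * (?N * (syt3_prob a b c * shifted_vandermonde a b c))"
    using syt3_prob_rec[of a b c] assms(3) by simp
  also have "\<dots> = syt3_prob a b c * syt3_number a b c"
    using pos by (auto simp: syt3_number_def)
  finally show ?thesis ..
qed

lemma syt3_count_all:
  assumes "c \<le> b" "b \<le> a"
  shows "real (syt3_count (\<lambda>_. True) a b c) = syt3_number a b c"
proof (rule shape3_rec_unique[where m = 0, OF _ _ _ assms])
  have "std_fillings {} 0 = {\<lambda>_. 0}"
    by (auto simp: std_fillings_def bij_betw_def)
  moreover have "shape3_cells 0 0 0 = {}"
    by (auto simp: shape3_cells_def)
  ultimately show "real (syt3_count (\<lambda>_. True) a b c) = syt3_number a b c" if "a + b + c = 0" for a b c
    using that by (simp add: syt3_count_def syt3_number_def hook_prefactor_def shifted_vandermonde_def)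
qed (simp_all add: syt3_count_rec syt3_number_rec)

lemma syt3_count_T12_eq_3_size3:
  assumes "c \<le> b" "b \<le> a" "a + b + c = 3"
  shows "real (syt3_count (\<lambda>T. T (1, 2) = 3) a b c) = syt3_prob a b c * syt3_number a b c"
proof (cases "corner (shape3_cells a b c) (1, 2)")
  case True
  then have "a = 2" "b < a"
    using corner_shape3_iff[OF assms(1,2), of 1 2] by simp_all
  with assms have abc: "a = 2" "b = 1" "c = 0"
    by arith+
  have "syt3_count (\<lambda>T. T (1, 2) = 3) a b c = card {T \<in> std_fillings (shape3_cells 1 1 0) 2. True}"
    using card_std_fillings_max_at[OF True, of 3 "\<lambda>_. True"] shape3_cells_remove_corner(1)[of 1 2 0]
    by (simp add: syt3_count_def abc)
  also have "real \<dots> = syt3_number 1 1 0"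
    using syt3_count_all[of 0 1 1] by (simp add: syt3_count_def numeral_2_eq_2)
  also have "\<dots> = syt3_prob a b c * syt3_number a b c"
    by (simp add: abc syt3_number_def hook_prefactor_def shifted_vandermonde_def syt3_prob_def
        syt3_prob_numerator_def fact_numeral)
  finally show ?thesis .
next
  case False
  then have none: "{T \<in> std_fillings (shape3_cells a b c) (a + b + c). T (1, 2) = 3} = {}"
    using std_fillings_max_at_corner[of _ "shape3_cells a b c" "a + b + c" "(1, 2)"] assms(3) by auto
  have "\<not> (a = 2 \<and> b = 1)"
    using False corner_shape3_iff[OF assms(1,2), of 1 2] by auto
  with assms consider "a = 3" "b = 0" "c = 0" | "a = 1" "b = 1" "c = 1"
    by arith
  then have "syt3_prob_numerator a b c = 0"
    by cases (simp_all add: syt3_prob_numerator_def)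
  then show ?thesis
    unfolding syt3_count_def none by (simp add: syt3_prob_def)
qed

lemma syt3_count_T12_eq_3:
  assumes "c \<le> b" "b \<le> a" "3 \<le> a + b + c"
  shows "real (syt3_count (\<lambda>T. T (1, 2) = 3) a b c) = syt3_prob a b c * syt3_number a b c"
proof (rule shape3_rec_unique[where m = 3, OF _ _ _ assms])
  show "real (syt3_count (\<lambda>T. T (1, 2) = 3) a b c) =
      corner_sum (\<lambda>a b c. real (syt3_count (\<lambda>T. T (1, 2) = 3) a b c)) a b c"
    if "c \<le> b" "b \<le> a" "3 < a + b + c" for a b c
    using that by (intro syt3_count_rec) auto
qed (blast intro: syt3_count_T12_eq_3_size3 syt3_prob_number_rec)+

lemma syt3_number_pos: "c \<le> b \<Longrightarrow> b \<le> a \<Longrightarrow> 0 < syt3_number a b c"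
  by (simp add: syt3_number_def hook_prefactor_def shifted_vandermonde_def)

theorem mainTheorem9:
  fixes n1 n2 n3 :: nat
  assumes "n1 \<ge> n2" "n2 \<ge> n3" "n1 \<ge> 2" "n1 + n2 + n3 \<ge> 3"
  shows "syt_prob (filter (\<lambda>x. x > 0) [n1, n2, n3]) (\<lambda>T. T (1, 2) = 3) =
    (let x = real n1; y = real n2; z = real n3 in
      (x^2*y + x^2*z + x*y^2 + 2*x*y*z + x*z^2 + y^2*z + y*z^2 - x*y - x*z + y^2 - y*z
        + 2*z^2 - 2*y - 6*z) / ((x + y + z - 2) * (x + y + z - 1) * (x + y + z)))"
proof -
  let ?lam = "filter (\<lambda>x. x > 0) [n1, n2, n3]"
  have "sum_list ?lam = n1 + n2 + n3"
    by simp
  then have "SYT ?lam = std_fillings (shape3_cells n1 n2 n3) (n1 + n2 + n3)"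
    unfolding SYT_eq_std_fillings cells_shape3[OF assms(2,1)] by simp
  then have "syt_prob ?lam (\<lambda>T. T (1, 2) = 3) =
      real (syt3_count (\<lambda>T. T (1, 2) = 3) n1 n2 n3) / real (syt3_count (\<lambda>_. True) n1 n2 n3)"
    by (simp add: syt_prob_def syt3_count_def)
  also have "\<dots> = syt3_prob n1 n2 n3"
    using syt3_count_T12_eq_3[OF assms(2,1,4)] syt3_count_all[OF assms(2,1)]
      syt3_number_pos[OF assms(2,1)] by simp
  finally show ?thesis
    by (simp add: syt3_prob_def syt3_prob_numerator_def Let_def)
qed

end
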